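(* For each $\eta\in(0,\eta_4)$ we have $\mathrm{Re}\,z_0,\ \mathrm{Re}\,w_1,\ \mathrm{Im}\,w_1\in(0,1)$.
   Context: For $\eta\in(0,\pi/3)$ let $a=\frac{e^{-i\eta}}{2\cos\eta}$, $c=\frac{1}{1-|a|^4}$, $z_0=ca$, $w_1=1-c|a|^2a$. Let $\Phi_4(\eta)=(1-|a|^4)\sin3\eta-|a|^3\sin2\eta+|a|^4\sin\eta$; it has a unique zero in $(\pi/4,\pi/3)$, denoted $\eta_4$. *)

theory Defs
  imports "HOL-Analysis.Analysis"
begin

definition aa :: "real \<Rightarrow> complex" where
  "aa \<eta> = cis (- \<eta>) / (2 * cos \<eta>)"

definition cc :: "real \<Rightarrow> real" where
  "cc \<eta> = 1 / (1 - cmod (aa \<eta>) ^ 4)"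

definition z0 :: "real \<Rightarrow> complex" where
  "z0 \<eta> = cc \<eta> * aa \<eta>"

definition w1 :: "real \<Rightarrow> complex" where
  "w1 \<eta> = 1 - cc \<eta> * (cmod (aa \<eta>))\<^sup>2 * aa \<eta>"

definition Phi4 :: "real \<Rightarrow> real" where
  "Phi4 \<eta> = (1 - cmod (aa \<eta>) ^ 4) * sin (3 * \<eta>) - cmod (aa \<eta>) ^ 3 * sin (2 * \<eta>)
              + cmod (aa \<eta>) ^ 4 * sin \<eta>"

definition eta4 :: real where
  "eta4 = (THE \<eta>. \<eta> \<in> {pi/4<..<pi/3} \<and> Phi4 \<eta> = 0)"

end

theory Submission
  imports Defs
begin

text \<open>
  With \<open>r = |a| = 1/(2 cos \<eta>)\<close> one has \<open>Re a = 1/2\<close>, \<open>Im a = -r sin \<eta>\<close> and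
  \<open>\<Phi>\<^sub>4(\<eta>) = sin \<eta> (1 - r\<^sup>2)(1 - 2r\<^sup>4)/r\<^sup>2\<close>, so \<open>\<eta>\<^sub>4\<close> is the angle with \<open>cos\<^sup>4 \<eta>\<^sub>4 = 1/8\<close>
  and \<open>\<eta> < \<eta>\<^sub>4\<close> means \<open>2r\<^sup>4 < 1\<close>. Writing \<open>c = 1/(1 - r\<^sup>4)\<close>, the three quantities are
  \<open>Re z\<^sub>0 = c/2\<close>, \<open>Re w\<^sub>1 = 1 - c r\<^sup>2/2\<close> and \<open>Im w\<^sub>1 = c r\<^sup>4 sin 2\<eta>\<close>, and each lies in
  \<open>(0,1)\<close> as soon as \<open>r\<^sup>4 < 1/2\<close>.
\<close>

lemma sin_triple: "sin (3 * x) = sin x * (4 * cos x ^ 2 - 1)" for x :: real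
proof -
  have "sin (3 * x) = sin (2 * x) * cos x + cos (2 * x) * sin x"
    using sin_add[of "2 * x" x] by simp
  also have "\<dots> = sin x * (4 * cos x ^ 2 - 1)"
    unfolding sin_double cos_double_cos by (simp add: power2_eq_square algebra_simps)
  finally show ?thesis .
qed

lemma cmod_aa: "cos \<eta> > 0 \<Longrightarrow> cmod (aa \<eta>) = 1 / (2 * cos \<eta>)"
  by (simp add: aa_def norm_divide)

lemma Re_aa: "cos \<eta> \<noteq> 0 \<Longrightarrow> Re (aa \<eta>) = 1 / 2"
  by (simp add: aa_def Re_divide power2_eq_square)

lemma Im_aa: "cos \<eta> > 0 \<Longrightarrow> Im (aa \<eta>) = - cmod (aa \<eta>) * sin \<eta>"
  by (simp add: cmod_aa) (simp add: aa_def Im_divide power2_eq_square)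

lemma Phi4_factor:
  assumes "cos \<eta> > 0"
  shows "Phi4 \<eta> = sin \<eta> * (1 - cmod (aa \<eta>) ^ 2) * (1 - 2 * cmod (aa \<eta>) ^ 4) / cmod (aa \<eta>) ^ 2"
proof -
  define r where "r = cmod (aa \<eta>)"
  have r_pos: "r > 0" and cos_eq: "cos \<eta> = 1 / (2 * r)"
    using assms by (simp_all add: r_def cmod_aa)
  have "Phi4 \<eta> = (1 - r ^ 4) * (sin \<eta> * (1 / r ^ 2 - 1)) - r ^ 3 * (sin \<eta> / r) + r ^ 4 * sin \<eta>"
    unfolding Phi4_def r_def[symmetric] sin_triple sin_double cos_eq
    by (simp add: power_divide)
  also have "\<dots> = sin \<eta> * (1 - r ^ 2) * (1 - 2 * r ^ 4) / r ^ 2"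
    using r_pos by (simp add: field_simps) (simp add: algebra_simps eval_nat_numeral)
  finally show ?thesis by (simp add: r_def)
qed

lemma Phi4_eq_0_iff:
  assumes "0 < \<eta>" "\<eta> < pi / 3"
  shows "Phi4 \<eta> = 0 \<longleftrightarrow> cos \<eta> ^ 4 = 1 / 8"
proof -
  have cos_gt: "cos \<eta> > 1 / 2"
    using cos_monotone_0_pi[of \<eta> "pi / 3"] assms by (simp add: cos_60)
  then have r_lt: "cmod (aa \<eta>) < 1"
    by (simp add: cmod_aa)
  have "sin \<eta> > 0"
    using assms pi_gt_zero by (intro sin_gt_zero) auto
  moreover have "1 - cmod (aa \<eta>) ^ 2 \<noteq> 0"
    using power_strict_mono[OF r_lt, of 2] by simp
  moreover have "cmod (aa \<eta>) \<noteq> 0"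
    using cos_gt by (simp add: cmod_aa)
  ultimately have "Phi4 \<eta> = 0 \<longleftrightarrow> 2 * cmod (aa \<eta>) ^ 4 = 1"
    using cos_gt by (simp add: Phi4_factor)
  also have "\<dots> \<longleftrightarrow> cos \<eta> ^ 4 = 1 / 8"
    using cos_gt by (simp add: cmod_aa power_divide field_simps)
  finally show ?thesis .
qed

lemma eta4_bounds: "eta4 \<in> {pi/4<..<pi/3}"
  and cos_eta4: "cos eta4 ^ 4 = 1 / 8"
proof -
  define k :: real where "k = root 4 (1 / 8)"
  have k_pow: "k ^ 4 = 1 / 8" and k_pos: "k > 0"
    by (simp_all add: k_def)
  have "(1 / 2) ^ 4 < k ^ 4" "k ^ 4 < (sqrt 2 / 2) ^ 4"
    using k_pow by (simp_all add: power_divide eval_nat_numeral)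
  then have k_gt: "1 / 2 < k" and k_lt: "k < sqrt 2 / 2"
    using k_pos by (auto dest: power_less_imp_less_base)
  have k_le_1: "k \<le> 1"
    using k_lt sqrt2_less_2 by linarith
  define e where "e = arccos k"
  have cos_e: "cos e = k" and e_range: "0 \<le> e" "e \<le> pi"
    using k_pos k_le_1 by (simp_all add: e_def arccos_lbound arccos_ubound)
  have "pi / 4 < e"
    using cos_mono_less_eq[of e "pi / 4"] e_range cos_e k_lt by (simp add: cos_45)
  moreover have "e < pi / 3"
    using cos_mono_less_eq[of "pi / 3" e] e_range cos_e k_gt by (simp add: cos_60)
  ultimately have e_zero: "e \<in> {pi/4<..<pi/3} \<and> Phi4 e = 0"
    using Phi4_eq_0_iff[of e] cos_e k_pow pi_gt_zero by simp
  have "\<eta> = e" if "\<eta> \<in> {pi/4<..<pi/3} \<and> Phi4 \<eta> = 0" for \<eta>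
  proof -
    have "cos \<eta> ^ 4 = 1 / 8" "cos \<eta> > 0"
      using that Phi4_eq_0_iff[of \<eta>] pi_gt_zero by (auto intro!: cos_gt_zero_pi)
    then have "cos \<eta> = k"
      unfolding k_def by (intro real_root_pos_unique[symmetric]) auto
    then show "\<eta> = e"
      using that pi_gt_zero arccos_cos[of \<eta>] by (simp add: e_def)
  qed
  with e_zero have "eta4 = e"
    unfolding eta4_def by (rule the_equality)
  with e_zero cos_e k_pow show "eta4 \<in> {pi/4<..<pi/3}" "cos eta4 ^ 4 = 1 / 8"
    by simp_all
qed

lemma cos_pow4_gt_below_eta4:
  assumes "0 < \<eta>" "\<eta> < eta4"
  shows "1 / 8 < cos \<eta> ^ 4"
proof -
  have "0 < cos eta4"
    using eta4_bounds pi_gt_zero by (intro cos_gt_zero_pi) auto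
  moreover have "cos eta4 < cos \<eta>"
    using assms eta4_bounds pi_gt_zero by (intro cos_monotone_0_pi) auto
  ultimately have "cos eta4 ^ 4 < cos \<eta> ^ 4"
    by (intro power_strict_mono) auto
  then show ?thesis
    by (simp add: cos_eta4)
qed

lemma Re_z0: "cos \<eta> \<noteq> 0 \<Longrightarrow> Re (z0 \<eta>) = cc \<eta> / 2"
  by (simp add: z0_def Re_aa)

lemma Re_w1: "cos \<eta> \<noteq> 0 \<Longrightarrow> Re (w1 \<eta>) = 1 - cc \<eta> * cmod (aa \<eta>) ^ 2 / 2"
  by (simp add: w1_def Re_aa)

lemma Im_w1:
  assumes "cos \<eta> > 0"
  shows "Im (w1 \<eta>) = cc \<eta> * cmod (aa \<eta>) ^ 4 * sin (2 * \<eta>)"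
proof -
  \<comment> \<open>\<open>sin \<eta> = r sin 2\<eta>\<close> because \<open>2 cos \<eta> = 1/r\<close>\<close>
  have "cmod (aa \<eta>) ^ 3 * sin \<eta> = cmod (aa \<eta>) ^ 4 * sin (2 * \<eta>)"
    using assms unfolding sin_double by (simp add: cmod_aa power_divide field_simps eval_nat_numeral)
  then show ?thesis
    using assms by (simp add: w1_def Im_aa eval_nat_numeral algebra_simps)
qed

lemma inverse_one_minus_pow4_bounds:
  fixes r s :: real
  assumes "0 < r" "2 * r ^ 4 < 1" "0 < s" "s \<le> 1"
  defines "c \<equiv> 1 / (1 - r ^ 4)"
  shows "c / 2 \<in> {0<..<1}" "1 - c * r ^ 2 / 2 \<in> {0<..<1}" "c * r ^ 4 * s \<in> {0<..<1}"
proof -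
  have r4: "0 < r ^ 4" "r ^ 4 < 1 / 2"
    using assms by simp_all
  have "(r ^ 2) ^ 2 < 1"
    using r4 by (simp flip: power_mult)
  then have "r ^ 2 < 1"
    using abs_square_less_1[of "r ^ 2"] by simp
  then have c_bounds: "c * r ^ 2 < 2" "c < 2" "c * r ^ 4 < 1"
    using r4 by (simp_all add: c_def field_simps)
  have "0 < c"
    using r4 by (simp add: c_def)
  then have "c * r ^ 4 * s \<le> c * r ^ 4"
    using assms(4) by (intro mult_left_le) auto
  with c_bounds have "c * r ^ 4 * s < 1"
    by linarith
  with c_bounds \<open>0 < c\<close> assms(1,3)
  show "c / 2 \<in> {0<..<1}" "1 - c * r ^ 2 / 2 \<in> {0<..<1}" "c * r ^ 4 * s \<in> {0<..<1}"
    by auto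
qed

theorem lemma5p1:
  fixes \<eta> :: real
  assumes "0 < \<eta>" and "\<eta> < eta4"
  shows "Re (z0 \<eta>) \<in> {0<..<1} \<and> Re (w1 \<eta>) \<in> {0<..<1} \<and> Im (w1 \<eta>) \<in> {0<..<1}"
proof -
  have "\<eta> < pi / 3"
    using assms eta4_bounds by simp
  then have cos_pos: "cos \<eta> > 0" and sin2_pos: "sin (2 * \<eta>) > 0"
    using assms pi_gt_zero by (auto intro!: cos_gt_zero_pi sin_gt_zero)
  have "2 * cmod (aa \<eta>) ^ 4 < 1"
    using cos_pow4_gt_below_eta4[OF assms] cos_pos by (simp add: cmod_aa power_divide field_simps)
  moreover have "cmod (aa \<eta>) > 0"
    using cos_pos by (simp add: cmod_aa)
  ultimately show ?thesis
    using inverse_one_minus_pow4_bounds[of "cmod (aa \<eta>)" "sin (2 * \<eta>)"] sin2_pos cos_pos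
    by (simp add: Re_z0 Re_w1 Im_w1 cc_def)
qed

end
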